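(* Let $A,B,C$ be three non-collinear points in the plane such that the angle $\angle BAC$ is not obtuse (i.e. $0<\angle BAC\le \pi/2$). Consider all rectangles $R$ having $A$ as a vertex such that one of the two sides of $R$ not containing $A$ contains $B$ and the other side of $R$ not containing $A$ contains $C$. Among these rectangles, the minimal area is attained by a rectangle one of whose sides is the segment $AB$ or the segment $AC$. *)

theory Defs
  imports "HOL-Analysis.Analysis"
begin

definition angle_at :: "real^2 \<Rightarrow> real^2 \<Rightarrow> real^2 \<Rightarrow> real" where
  "angle_at B A C = arccos (((B - A) \<bullet> (C - A)) / (norm (B - A) * norm (C - A)))"

text \<open>A rectangle with vertex A is given by its two vertices P, Q adjacent to A
  (non-degenerate, with AP perpendicular to AQ); its fourth vertex is P + Q - A.\<close>
definition rect_at :: "real^2 \<Rightarrow> real^2 \<Rightarrow> real^2 \<Rightarrow> bool" where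
  "rect_at A P Q \<longleftrightarrow> P \<noteq> A \<and> Q \<noteq> A \<and> (P - A) \<bullet> (Q - A) = 0"

definition rect_area :: "real^2 \<Rightarrow> real^2 \<Rightarrow> real^2 \<Rightarrow> real" where
  "rect_area A P Q = norm (P - A) * norm (Q - A)"

definition admissible :: "real^2 \<Rightarrow> real^2 \<Rightarrow> real^2 \<Rightarrow> real^2 \<Rightarrow> real^2 \<Rightarrow> bool" where
  "admissible A B C P Q \<longleftrightarrow> rect_at A P Q \<and>
     ((B \<in> closed_segment P (P + Q - A) \<and> C \<in> closed_segment Q (P + Q - A)) \<or>
      (C \<in> closed_segment P (P + Q - A) \<and> B \<in> closed_segment Q (P + Q - A)))"

end

theory Submission
  imports Defs
begin

text \<open>Write \<open>u = B - A\<close>, \<open>v = C - A\<close>. If the sides at \<open>A\<close> of an admissible rectangle are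
  \<open>p, q\<close>, then \<open>u, v\<close> are \<open>p + s q\<close> and \<open>q + t p\<close> with \<open>s, t \<in> [0,1]\<close>, so the determinant
  \<open>det(u, v) = det(p, q) (1 - s t)\<close> is at most the area \<open>|det(p, q)|\<close> in absolute value.
  Since the angle at \<open>A\<close> is not obtuse, one of \<open>u, v\<close>, say \<open>u\<close>, satisfies
  \<open>0 \<le> u \<bullet> v \<le> u \<bullet> u\<close>; taking \<open>p = u\<close> and \<open>q\<close> the component of \<open>v\<close> orthogonal to \<open>u\<close> gives an
  admissible rectangle (\<open>t = u \<bullet> v / u \<bullet> u\<close>, \<open>s = 0\<close>) of area exactly \<open>|det(u, v)|\<close>.\<close>

definition cross2 :: "real^2 \<Rightarrow> real^2 \<Rightarrow> real" where
  "cross2 x y = x$1 * y$2 - x$2 * y$1"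

lemma inner_vec2: "(x::real^2) \<bullet> y = x$1 * y$1 + x$2 * y$2"
  by (simp add: inner_vec_def sum_2)

lemma norm_vec2_sq: "(norm (x::real^2))\<^sup>2 = x$1 * x$1 + x$2 * x$2"
  by (simp add: power2_norm_eq_inner inner_vec2)

lemma cross2_commute: "cross2 y x = - cross2 x y"
  by (simp add: cross2_def)

lemma cross2_add_scaleR: "cross2 (p + s *\<^sub>R q) (q + t *\<^sub>R p) = cross2 p q * (1 - s * t)"
  by (simp add: cross2_def algebra_simps)

lemma norm_mult_norm_sq_eq: "(norm p * norm q)\<^sup>2 = (cross2 p q)\<^sup>2 + (p \<bullet> q)\<^sup>2"
  unfolding power_mult_distrib norm_vec2_sq
  by (simp add: inner_vec2 cross2_def power2_eq_square algebra_simps)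

lemma norm_mult_norm_eq_abs_cross2:
  assumes "p \<bullet> q = 0"
  shows "norm p * norm q = \<bar>cross2 p q\<bar>"
proof -
  have "(norm p * norm q)\<^sup>2 = \<bar>cross2 p q\<bar>\<^sup>2"
    using norm_mult_norm_sq_eq[of p q] assms by simp
  then show ?thesis
    by (subst (asm) power2_eq_iff_nonneg) auto
qed

lemma collinear_0_if_cross2_eq_0:
  assumes "cross2 u v = 0"
  shows "collinear {0, u, v}"
proof (cases "u = 0")
  case True
  then show ?thesis by (simp add: collinear_lemma)
next
  case False
  then consider "u$1 \<noteq> 0" | "u$2 \<noteq> 0"
    by (auto simp: vec_eq_iff forall_2)
  then obtain c where "v = c *\<^sub>R u"
  proof cases
    case 1
    then show ?thesis
      using that[of "v$1 / u$1"] assms by (auto simp: vec_eq_iff forall_2 cross2_def field_simps)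
  next
    case 2
    then show ?thesis
      using that[of "v$2 / u$2"] assms by (auto simp: vec_eq_iff forall_2 cross2_def field_simps)
  qed
  then show ?thesis
    unfolding collinear_lemma by blast
qed

lemma collinear_if_cross2_eq_0:
  "cross2 (B - A) (C - A) = 0 \<Longrightarrow> collinear {A, B, C}"
  using collinear_0_if_cross2_eq_0[of "B - A" "C - A"] collinear_3[of B A C]
  by (simp add: insert_commute)

lemma inner_nonneg_if_angle_at_le_pi_half:
  assumes "angle_at B A C \<le> pi / 2"
  shows "0 \<le> (B - A) \<bullet> (C - A)"
proof (rule ccontr)
  define u v where "u = B - A" and "v = C - A"
  assume "\<not> 0 \<le> (B - A) \<bullet> (C - A)"
  then have neg: "u \<bullet> v < 0"
    by (simp add: u_def v_def)
  then have pos: "norm u * norm v > 0"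
    by (metis inner_zero_left inner_zero_right less_irrefl zero_less_norm_iff mult_pos_pos)
  have "\<bar>u \<bullet> v\<bar> \<le> norm u * norm v"
    by (rule Cauchy_Schwarz_ineq2)
  then have "arccos 0 < arccos ((u \<bullet> v) / (norm u * norm v))"
    using neg pos by (intro arccos_less_arccos) (auto simp: field_simps divide_neg_pos)
  then show False
    using assms by (simp add: angle_at_def u_def v_def)
qed

lemma inner_le_inner_self_either:
  fixes u v :: "'a::real_inner"
  shows "u \<bullet> v \<le> u \<bullet> u \<or> u \<bullet> v \<le> v \<bullet> v"
proof (rule ccontr)
  assume "\<not> ?thesis"
  then have "(u \<bullet> u) * (v \<bullet> v) < (u \<bullet> v) * (u \<bullet> v)"
    using inner_ge_zero[of u] inner_ge_zero[of v]
    by (intro mult_strict_mono) (auto intro: order.strict_trans1[of 0 "u \<bullet> u"])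
  then show False
    using Cauchy_Schwarz_ineq[of u v] by (simp add: power2_eq_square)
qed

lemma admissible_swap: "admissible A B C P Q \<longleftrightarrow> admissible A C B P Q"
  by (auto simp: admissible_def)

lemma rect_area_eq_abs_cross2:
  "rect_at A P Q \<Longrightarrow> rect_area A P Q = \<bar>cross2 (P - A) (Q - A)\<bar>"
  by (simp add: rect_at_def rect_area_def norm_mult_norm_eq_abs_cross2)

lemma far_side_decomp:
  assumes "X \<in> closed_segment P (P + Q - A)"
  obtains s where "0 \<le> s" "s \<le> 1" "X - A = (P - A) + s *\<^sub>R (Q - A)"
proof -
  obtain s where "0 \<le> s" "s \<le> 1" "X = (1 - s) *\<^sub>R P + s *\<^sub>R (P + Q - A)"
    using assms by (auto simp: in_segment)
  then show ?thesis
    using that by (simp add: algebra_simps)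
qed

lemma abs_cross2_le_rect_area:
  assumes "admissible A B C P Q"
  shows "\<bar>cross2 (B - A) (C - A)\<bar> \<le> rect_area A P Q"
proof -
  define p q where "p = P - A" and "q = Q - A"
  have area: "rect_area A P Q = \<bar>cross2 p q\<bar>"
    using assms by (simp add: admissible_def rect_area_eq_abs_cross2 p_def q_def)
  have shrink: "\<bar>cross2 (p + s *\<^sub>R q) (q + t *\<^sub>R p)\<bar> \<le> \<bar>cross2 p q\<bar>"
    if "0 \<le> s" "s \<le> 1" "0 \<le> t" "t \<le> 1" for s t :: real
  proof -
    have "\<bar>1 - s * t\<bar> \<le> 1"
      using that mult_le_one[of s t] by simp
    then show ?thesis
      by (simp add: cross2_add_scaleR abs_mult mult_left_le)
  qed
  have bound: "\<bar>cross2 (X - A) (Y - A)\<bar> \<le> \<bar>cross2 p q\<bar>"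
    if X: "X \<in> closed_segment P (P + Q - A)" and Y: "Y \<in> closed_segment Q (P + Q - A)" for X Y
  proof -
    obtain s where s: "0 \<le> s" "s \<le> 1" "X - A = p + s *\<^sub>R q"
      using far_side_decomp[OF X] p_def q_def by metis
    have "Y \<in> closed_segment Q (Q + P - A)"
      using Y by (simp add: add.commute)
    then obtain t where t: "0 \<le> t" "t \<le> 1" "Y - A = q + t *\<^sub>R p"
      using far_side_decomp p_def q_def by metis
    show ?thesis
      using shrink[OF s(1,2) t(1,2)] by (simp add: s(3) t(3))
  qed
  have "\<bar>cross2 (B - A) (C - A)\<bar> \<le> \<bar>cross2 p q\<bar>"
    using assms bound[of B C] bound[of C B] cross2_commute[of "B - A" "C - A"]
    by (auto simp: admissible_def)
  then show ?thesis
    using area by simp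
qed

lemma admissible_on_side_with_area_abs_cross2:
  assumes nz: "cross2 (B - A) (C - A) \<noteq> 0"
    and acute: "0 \<le> (B - A) \<bullet> (C - A)" "(B - A) \<bullet> (C - A) \<le> (B - A) \<bullet> (B - A)"
  shows "\<exists>Q. admissible A B C B Q \<and> rect_area A B Q = \<bar>cross2 (B - A) (C - A)\<bar>"
proof -
  define u v where "u = B - A" and "v = C - A"
  have "u \<noteq> 0"
    using nz by (auto simp: u_def cross2_def)
  then have uu: "u \<bullet> u > 0"
    by simp
  define t where "t = (u \<bullet> v) / (u \<bullet> u)"
  have t: "0 \<le> t" "t \<le> 1"
    using acute uu by (auto simp: t_def u_def v_def)
  define Q where "Q = A + (v - t *\<^sub>R u)"
  have orth: "u \<bullet> (Q - A) = 0"
    using uu by (simp add: Q_def t_def inner_diff_right)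
  have cross: "cross2 u (Q - A) = cross2 u v"
    by (simp add: Q_def cross2_def algebra_simps)
  then have "rect_at A B Q"
    using nz orth by (auto simp: rect_at_def u_def v_def cross2_def)
  moreover have "C \<in> closed_segment Q (B + Q - A)"
    unfolding in_segment
    by (rule exI[of _ t]) (use t in \<open>simp add: Q_def u_def v_def algebra_simps\<close>)
  ultimately have "admissible A B C B Q"
    by (simp add: admissible_def)
  moreover have "rect_area A B Q = \<bar>cross2 (B - A) (C - A)\<bar>"
    using \<open>rect_at A B Q\<close> cross by (simp add: rect_area_eq_abs_cross2 u_def v_def)
  ultimately show ?thesis
    by blast
qed

lemma minimal_admissible_on_side:
  assumes "\<not> collinear {A, B, C}"
    and "0 \<le> (B - A) \<bullet> (C - A)" "(B - A) \<bullet> (C - A) \<le> (B - A) \<bullet> (B - A)"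
  shows "\<exists>Q. admissible A B C B Q \<and>
           (\<forall>P' Q'. admissible A B C P' Q' \<longrightarrow> rect_area A B Q \<le> rect_area A P' Q')"
  using admissible_on_side_with_area_abs_cross2[OF _ assms(2,3)]
    collinear_if_cross2_eq_0 assms(1) abs_cross2_le_rect_area
  by metis

theorem lemma1:
  fixes A B C :: "real^2"
  assumes "\<not> collinear {A, B, C}"
    and "0 < angle_at B A C" and "angle_at B A C \<le> pi / 2"
  shows "\<exists>P Q. admissible A B C P Q \<and>
           (\<forall>P' Q'. admissible A B C P' Q' \<longrightarrow> rect_area A P Q \<le> rect_area A P' Q') \<and>
           (closed_segment A P = closed_segment A B \<or> closed_segment A Q = closed_segment A B \<or>
            closed_segment A P = closed_segment A C \<or> closed_segment A Q = closed_segment A C)"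
proof -
  have nonneg: "0 \<le> (B - A) \<bullet> (C - A)"
    using assms(3) by (rule inner_nonneg_if_angle_at_le_pi_half)
  consider "(B - A) \<bullet> (C - A) \<le> (B - A) \<bullet> (B - A)"
    | "(C - A) \<bullet> (B - A) \<le> (C - A) \<bullet> (C - A)"
    using inner_le_inner_self_either inner_commute by metis
  then show ?thesis
  proof cases
    case 1
    then show ?thesis
      using minimal_admissible_on_side[OF assms(1) nonneg] by blast
  next
    case 2
    have "\<not> collinear {A, C, B}"
      using assms(1) by (simp add: insert_commute)
    then show ?thesis
      using minimal_admissible_on_side[of A C B] 2 nonneg
      by (simp add: inner_commute admissible_swap) blast
  qed
qed

end
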